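(* Fix an integer $k\geq1$ and $V=\{0,\ldots,k\}$. If a Boolean function $\varphi$ on $V$ satisfies $\varphi\simeq\bot$, then $\varphi$ is fragmentable.
   Context: A valuation is a subset $\nu\subseteq V$; $\nu^{(l)}$ is $\nu$ with membership of $l$ flipped. A Boolean function on $V$ is a map $\varphi:2^V\to\{\text{false},\text{true}\}$; $\mathrm{sat}(\varphi)$ is its set of satisfying valuations; $\bot$ is the constant-false function. Write $\varphi\xrightarrow{+(\nu,l)}\varphi'$ if $\nu,\nu^{(l)}\notin\mathrm{sat}(\varphi)$ and $\mathrm{sat}(\varphi')=\mathrm{sat}(\varphi)\cup\{\nu,\nu^{(l)}\}$, and $\varphi\xrightarrow{-(\nu,l)}\varphi'$ if $\varphi'\xrightarrow{+(\nu,l)}\varphi$. Write $\varphi\xrightarrow{\pm}\varphi'$ if one of these holds for some $\nu,l$; $\simeq$ is the reflexive-transitive closure of $\xrightarrow{\pm}$ (an equivalence relation). $\varphi$ is degenerate if there is $l\in V$ with $\varphi(\nu)=\varphi(\nu^{(l)})$ for all $\nu$. Two functions are disjoint if no valuation satisfies both. A $\neg$-$\vee$-template is a Boolean circuit all of whose internal gates are $\neg$- or $\vee$-gates (a single leaf is allowed); its leaves $l_0,\ldots,l_n$ are holes. $T[\varphi_0,\ldots,\varphi_n]$ is obtained by substituting $\varphi_i$ for $l_i$; it is deterministic if, for every $\vee$-gate of the template, distinct inputs compute disjoint functions. $\varphi$ is fragmentable if there exist a template $T$ and degenerate $\varphi_0,\ldots,\varphi_n$ with $T[\varphi_0,\ldots,\varphi_n]$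 deterministic and equivalent to $\varphi$. *)

theory Defs
  imports Main
begin

text \<open>Valuations are subsets of V (here represented as nat sets); a Boolean function on V
is a map from valuations to bool; only its values on subsets of V matter.\<close>

type_synonym bfun = "nat set \<Rightarrow> bool"

definition flip :: "nat set \<Rightarrow> nat \<Rightarrow> nat set" where
  "flip \<nu> l = (if l \<in> \<nu> then \<nu> - {l} else insert l \<nu>)"

definition sat :: "nat set \<Rightarrow> bfun \<Rightarrow> nat set set" where
  "sat V \<phi> = {\<nu>. \<nu> \<subseteq> V \<and> \<phi> \<nu>}"

definition bot_fun :: bfun where
  "bot_fun = (\<lambda>_. False)"

definition plus_step :: "nat set \<Rightarrow> bfun \<Rightarrow> nat set \<Rightarrow> nat \<Rightarrow> bfun \<Rightarrow> bool" where
  "plus_step V \<phi> \<nu> l \<phi>' \<longleftrightarrow> \<nu> \<subseteq> V \<and> l \<in> V \<and>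
     \<nu> \<notin> sat V \<phi> \<and> flip \<nu> l \<notin> sat V \<phi> \<and>
     sat V \<phi>' = sat V \<phi> \<union> {\<nu>, flip \<nu> l}"

definition minus_step :: "nat set \<Rightarrow> bfun \<Rightarrow> nat set \<Rightarrow> nat \<Rightarrow> bfun \<Rightarrow> bool" where
  "minus_step V \<phi> \<nu> l \<phi>' \<longleftrightarrow> plus_step V \<phi>' \<nu> l \<phi>"

definition pm_step :: "nat set \<Rightarrow> bfun \<Rightarrow> bfun \<Rightarrow> bool" where
  "pm_step V \<phi> \<phi>' \<longleftrightarrow> (\<exists>\<nu> l. plus_step V \<phi> \<nu> l \<phi>' \<or> minus_step V \<phi> \<nu> l \<phi>')"

definition bequiv :: "nat set \<Rightarrow> bfun \<Rightarrow> bfun \<Rightarrow> bool" where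
  "bequiv V = (pm_step V)\<^sup>*\<^sup>*"

definition degenerate :: "nat set \<Rightarrow> bfun \<Rightarrow> bool" where
  "degenerate V \<phi> \<longleftrightarrow> (\<exists>l\<in>V. \<forall>\<nu>. \<nu> \<subseteq> V \<longrightarrow> \<phi> \<nu> = \<phi> (flip \<nu> l))"

text \<open>Negation/disjunction templates (circuits unfolded into trees; holes indexed by nat).\<close>
datatype tmpl = Hole nat | Neg tmpl | Or "tmpl list"

fun holes :: "tmpl \<Rightarrow> nat set" where
  "holes (Hole i) = {i}"
| "holes (Neg t) = holes t"
| "holes (Or ts) = (\<Union>t\<in>set ts. holes t)"

fun tsubst :: "tmpl \<Rightarrow> (nat \<Rightarrow> bfun) \<Rightarrow> bfun" where
  "tsubst (Hole i) \<sigma> = \<sigma> i"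
| "tsubst (Neg t) \<sigma> = (\<lambda>\<nu>. \<not> tsubst t \<sigma> \<nu>)"
| "tsubst (Or ts) \<sigma> = (\<lambda>\<nu>. \<exists>t\<in>set ts. tsubst t \<sigma> \<nu>)"

definition disjoint_fun :: "nat set \<Rightarrow> bfun \<Rightarrow> bfun \<Rightarrow> bool" where
  "disjoint_fun V \<phi> \<psi> \<longleftrightarrow> (\<forall>\<nu>. \<nu> \<subseteq> V \<longrightarrow> \<not> (\<phi> \<nu> \<and> \<psi> \<nu>))"

fun deterministic :: "nat set \<Rightarrow> tmpl \<Rightarrow> (nat \<Rightarrow> bfun) \<Rightarrow> bool" where
  "deterministic V (Hole i) \<sigma> = True"
| "deterministic V (Neg t) \<sigma> = deterministic V t \<sigma>"
| "deterministic V (Or ts) \<sigma> =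
     ((\<forall>t\<in>set ts. deterministic V t \<sigma>) \<and>
      (\<forall>i j. i < length ts \<longrightarrow> j < length ts \<longrightarrow> i \<noteq> j \<longrightarrow>
         disjoint_fun V (tsubst (ts ! i) \<sigma>) (tsubst (ts ! j) \<sigma>)))"

definition fragmentable :: "nat set \<Rightarrow> bfun \<Rightarrow> bool" where
  "fragmentable V \<phi> \<longleftrightarrow>
     (\<exists>T \<sigma>. (\<forall>i\<in>holes T. degenerate V (\<sigma> i)) \<and> deterministic V T \<sigma> \<and>
            (\<forall>\<nu>. \<nu> \<subseteq> V \<longrightarrow> tsubst T \<sigma> \<nu> = \<phi> \<nu>))"

end

theory Submission
  imports Defs
begin

text \<open>Fragmentable functions contain the degenerate ones and are closed under negation and
  disjoint disjunction. A \<open>+(\<nu>,l)\<close>-step adds to \<open>\<phi>\<close> the disjoint edge \<open>{\<nu>, flip \<nu> l}\<close>, whose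
  indicator is degenerate in \<open>l\<close>; so \<open>\<phi>' = \<phi> \<or> edge\<close> and \<open>\<phi> = \<not>(\<not>\<phi>' \<or> edge)\<close> are both
  deterministic decompositions. Hence fragmentability is invariant under \<open>\<simeq>\<close>, and \<open>\<bottom>\<close> is
  degenerate.\<close>

fun ren :: "(nat \<Rightarrow> nat) \<Rightarrow> tmpl \<Rightarrow> tmpl" where
  "ren f (Hole i) = Hole (f i)"
| "ren f (Neg t) = Neg (ren f t)"
| "ren f (Or ts) = Or (map (ren f) ts)"

lemma tsubst_ren: "tsubst (ren f T) \<sigma> = tsubst T (\<sigma> \<circ> f)"
  by (induction T) auto

lemma holes_ren: "holes (ren f T) = f ` holes T"
  by (induction T) auto

lemma deterministic_ren: "deterministic V (ren f T) \<sigma> = deterministic V T (\<sigma> \<circ> f)"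
  by (induction T) (auto simp: tsubst_ren comp_def)

lemma fragmentable_degenerate: "degenerate V \<psi> \<Longrightarrow> fragmentable V \<psi>"
  unfolding fragmentable_def
  by (rule exI[of _ "Hole 0"], rule exI[of _ "\<lambda>_. \<psi>"]) auto

lemma fragmentable_cong:
  "fragmentable V \<psi> \<Longrightarrow> (\<And>\<nu>. \<nu> \<subseteq> V \<Longrightarrow> \<phi> \<nu> = \<psi> \<nu>) \<Longrightarrow> fragmentable V \<phi>"
  unfolding fragmentable_def by metis

lemma fragmentable_Not: "fragmentable V \<phi> \<Longrightarrow> fragmentable V (\<lambda>\<nu>. \<not> \<phi> \<nu>)"
  unfolding fragmentable_def
proof (elim exE conjE)
  fix T \<sigma>
  assume "\<forall>i\<in>holes T. degenerate V (\<sigma> i)" "deterministic V T \<sigma>"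
    "\<forall>\<nu>. \<nu> \<subseteq> V \<longrightarrow> tsubst T \<sigma> \<nu> = \<phi> \<nu>"
  then show "\<exists>T \<sigma>. (\<forall>i\<in>holes T. degenerate V (\<sigma> i)) \<and> deterministic V T \<sigma> \<and>
      (\<forall>\<nu>. \<nu> \<subseteq> V \<longrightarrow> tsubst T \<sigma> \<nu> = (\<not> \<phi> \<nu>))"
    by (intro exI[of _ "Neg T"] exI[of _ \<sigma>]) auto
qed

lemma fragmentable_disj:
  assumes "fragmentable V \<phi>" "fragmentable V \<psi>" "disjoint_fun V \<phi> \<psi>"
  shows "fragmentable V (\<lambda>\<nu>. \<phi> \<nu> \<or> \<psi> \<nu>)"
proof -
  obtain T1 \<sigma>1 where 1: "\<forall>i\<in>holes T1. degenerate V (\<sigma>1 i)" "deterministic V T1 \<sigma>1"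
    "\<forall>\<nu>. \<nu> \<subseteq> V \<longrightarrow> tsubst T1 \<sigma>1 \<nu> = \<phi> \<nu>"
    using assms(1) unfolding fragmentable_def by blast
  obtain T2 \<sigma>2 where 2: "\<forall>i\<in>holes T2. degenerate V (\<sigma>2 i)" "deterministic V T2 \<sigma>2"
    "\<forall>\<nu>. \<nu> \<subseteq> V \<longrightarrow> tsubst T2 \<sigma>2 \<nu> = \<psi> \<nu>"
    using assms(2) unfolding fragmentable_def by blast
  \<comment> \<open>the holes of the two templates are kept apart by sending them to even and odd indices\<close>
  define \<sigma> where "\<sigma> = (\<lambda>i::nat. if even i then \<sigma>1 (i div 2) else \<sigma>2 (i div 2))"
  define T where "T = Or [ren (\<lambda>i. 2 * i) T1, ren (\<lambda>i. 2 * i + 1) T2]"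
  have \<sigma>1: "\<sigma> \<circ> (\<lambda>i. 2 * i) = \<sigma>1" and \<sigma>2: "\<sigma> \<circ> (\<lambda>i. 2 * i + 1) = \<sigma>2"
    unfolding \<sigma>_def by auto
  have "\<forall>i\<in>holes T. degenerate V (\<sigma> i)"
    using 1(1) 2(1) unfolding T_def \<sigma>_def by (auto simp: holes_ren)
  moreover have "disjoint_fun V (tsubst T1 \<sigma>1) (tsubst T2 \<sigma>2)"
    "disjoint_fun V (tsubst T2 \<sigma>2) (tsubst T1 \<sigma>1)"
    using assms(3) 1(3) 2(3) unfolding disjoint_fun_def by auto
  then have "deterministic V T \<sigma>"
    using 1(2) 2(2) \<sigma>1 \<sigma>2
    by (auto simp: T_def deterministic_ren tsubst_ren less_Suc_eq nth_Cons')
  moreover have "\<forall>\<nu>. \<nu> \<subseteq> V \<longrightarrow> tsubst T \<sigma> \<nu> = (\<phi> \<nu> \<or> \<psi> \<nu>)"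
    using 1(3) 2(3) \<sigma>1 \<sigma>2 by (auto simp: T_def tsubst_ren)
  ultimately show ?thesis
    unfolding fragmentable_def by blast
qed

definition edge :: "nat set \<Rightarrow> nat \<Rightarrow> bfun" where
  "edge \<nu> l = (\<lambda>\<mu>. \<mu> = \<nu> \<or> \<mu> = flip \<nu> l)"

lemma flip_flip [simp]: "flip (flip \<nu> l) l = \<nu>"
  unfolding flip_def by auto

lemma degenerate_edge: "l \<in> V \<Longrightarrow> degenerate V (edge \<nu> l)"
  unfolding degenerate_def edge_def by (metis flip_flip)

lemma plus_step_edge:
  assumes "plus_step V \<phi> \<nu> l \<phi>'" "\<mu> \<subseteq> V"
  shows "\<phi>' \<mu> = (\<phi> \<mu> \<or> edge \<nu> l \<mu>)" "\<not> (\<phi> \<mu> \<and> edge \<nu> l \<mu>)"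
proof -
  have "\<mu> \<in> sat V \<phi>' \<longleftrightarrow> \<mu> \<in> sat V \<phi> \<or> edge \<nu> l \<mu>"
    using assms(1) unfolding plus_step_def edge_def by auto
  then show "\<phi>' \<mu> = (\<phi> \<mu> \<or> edge \<nu> l \<mu>)"
    using assms(2) unfolding sat_def by auto
  show "\<not> (\<phi> \<mu> \<and> edge \<nu> l \<mu>)"
    using assms unfolding plus_step_def edge_def sat_def by auto
qed

lemma fragmentable_plus_step_iff:
  assumes step: "plus_step V \<phi> \<nu> l \<phi>'"
  shows "fragmentable V \<phi>' \<longleftrightarrow> fragmentable V \<phi>"
proof -
  have edge: "fragmentable V (edge \<nu> l)"
    using step by (auto simp: plus_step_def intro: fragmentable_degenerate degenerate_edge)
  show ?thesis
  proof
    assume "fragmentable V \<phi>'"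
    moreover have "disjoint_fun V (\<lambda>\<mu>. \<not> \<phi>' \<mu>) (edge \<nu> l)"
      using plus_step_edge[OF step] unfolding disjoint_fun_def by blast
    ultimately have "fragmentable V (\<lambda>\<mu>. \<not> (\<not> \<phi>' \<mu> \<or> edge \<nu> l \<mu>))"
      by (intro fragmentable_Not fragmentable_disj edge)
    then show "fragmentable V \<phi>"
      by (rule fragmentable_cong) (use plus_step_edge[OF step] in blast)
  next
    assume "fragmentable V \<phi>"
    moreover have "disjoint_fun V \<phi> (edge \<nu> l)"
      using plus_step_edge[OF step] unfolding disjoint_fun_def by blast
    ultimately have "fragmentable V (\<lambda>\<mu>. \<phi> \<mu> \<or> edge \<nu> l \<mu>)"
      by (intro fragmentable_disj edge)
    then show "fragmentable V \<phi>'"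
      by (rule fragmentable_cong) (use plus_step_edge[OF step] in blast)
  qed
qed

lemma fragmentable_pm_step_iff: "pm_step V \<phi> \<phi>' \<Longrightarrow> fragmentable V \<phi> \<longleftrightarrow> fragmentable V \<phi>'"
  unfolding pm_step_def minus_step_def by (metis fragmentable_plus_step_iff)

lemma fragmentable_bequiv_iff:
  assumes "bequiv V \<phi> \<psi>"
  shows "fragmentable V \<phi> \<longleftrightarrow> fragmentable V \<psi>"
  using assms unfolding bequiv_def
  by (induction rule: rtranclp_induct) (auto simp: fragmentable_pm_step_iff)

theorem proposition5p8:
  fixes k :: nat and \<phi> :: "nat set \<Rightarrow> bool"
  assumes "k \<ge> 1"
    and "bequiv {0..k} \<phi> bot_fun"
  shows "fragmentable {0..k} \<phi>"
proof -
  have "degenerate {0..k} bot_fun"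
    by (auto simp: degenerate_def bot_fun_def)
  then show ?thesis
    using fragmentable_bequiv_iff[OF assms(2)] fragmentable_degenerate by blast
qed

end
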